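(* Let $n\ge2$, let $\mathrm S\subseteq\{B_{ij}\}\cup\{C_{ij}\}\cup\{D_{ij}\}$ ($1\le i<j\le n$) with associated edge-colored multigraph $\mathscr G_{\mathrm S}$, and let $A\in\mathfrak{su}(n)$ with associated edge-colored multigraph $\mathscr G_A$. Suppose (i) each connected component of $\mathscr G_{\mathrm S}$ contains at least three nodes; (ii) $\mathscr G_A$ has no multi-edges and the union $\mathscr G_A\cup\mathscr G_{\mathrm S}$ is connected; (iii) $\mathscr G_A\cup\mathscr G_{\mathrm S}$ has a self-loop or a cycle containing an odd number of Red edges. Then the real Lie algebra generated by $\{A\}\cup\mathrm S$ equals $\mathfrak{su}(n)$.
   Context: $E_{ij}$ is the $n\times n$ matrix unit; $B_{ij}=E_{ij}-E_{ji}$, $C_{ij}=\mathrm i(E_{ij}+E_{ji})$, $D_{ij}=\mathrm i(E_{ii}-E_{jj})$; $\mathfrak{su}(n)$ is the real Lie algebra of traceless skew-Hermitian matrices with commutator bracket. Edge-colored multigraphs have node set $\{1,\dots,n\}$ and edges $\{i,j;c\}$, $c\in\{\text{Blue},\text{Red},\text{Green}\}$ ($\{i,i;c\}$ a self-loop; a multi-edge is two or more edges of different colors with identical endpoints). $\mathscr G_{\mathrm S}$: a Blue edge $\{i,j\}$ for each $B_{ij}\in\mathrm S$, a Red edge $\{i,j\}$ for each $C_{ij}\in\mathrm S$, Green self-loops $\{i,i\},\{j,j\}$ for each $D_{ij}\in\mathrm S$. $\mathscr G_A$: a Blue edge $\{i,j\}$ ($i\ne j$) iff $\mathrm{Re}(A_{ij})\ne0$,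 a Red edge $\{i,j\}$ ($i\ne j$) iff $\mathrm{Im}(A_{ij})\ne0$, a Green self-loop $\{i,i\}$ iff $A_{ii}\ne0$. The union has the union of edge sets. A cycle is a closed walk; connected means any two nodes are joined by a walk; components are maximal connected subgraphs. *)

theory Defs
  imports "Jordan_Normal_Form.Matrix"
begin

text \<open>Indices are 0-based: the paper's node/index k (1..n) corresponds to k-1 here.\<close>

datatype gen = GB nat nat | GC nat nat | GD nat nat

definition Emat :: "nat \<Rightarrow> nat \<Rightarrow> nat \<Rightarrow> complex mat" where
  "Emat n i j = mat n n (\<lambda>(k,l). if k = i \<and> l = j then 1 else 0)"

fun gen_mat :: "nat \<Rightarrow> gen \<Rightarrow> complex mat" where
  "gen_mat n (GB i j) = Emat n i j - Emat n j i"
| "gen_mat n (GC i j) = \<i> \<cdot>\<^sub>m (Emat n i j + Emat n j i)"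
| "gen_mat n (GD i j) = \<i> \<cdot>\<^sub>m (Emat n i i - Emat n j j)"

definition valid_gen :: "nat \<Rightarrow> gen \<Rightarrow> bool" where
  "valid_gen n g = (case g of GB i j \<Rightarrow> i < j \<and> j < n
                            | GC i j \<Rightarrow> i < j \<and> j < n
                            | GD i j \<Rightarrow> i < j \<and> j < n)"

definition su :: "nat \<Rightarrow> complex mat set" where
  "su n = {A \<in> carrier_mat n n.
             (\<forall>i<n. \<forall>j<n. A $$ (i,j) = - cnj (A $$ (j,i))) \<and>
             (\<Sum>i<n. A $$ (i,i)) = 0}"

definition commutator :: "complex mat \<Rightarrow> complex mat \<Rightarrow> complex mat" where
  "commutator X Y = X * Y - Y * X"

inductive_set lie_gen :: "nat \<Rightarrow> complex mat set \<Rightarrow> complex mat set"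
  for n :: nat and X :: "complex mat set" where
  base: "x \<in> X \<Longrightarrow> x \<in> carrier_mat n n \<Longrightarrow> x \<in> lie_gen n X"
| zero: "0\<^sub>m n n \<in> lie_gen n X"
| smult: "x \<in> lie_gen n X \<Longrightarrow> complex_of_real r \<cdot>\<^sub>m x \<in> lie_gen n X"
| add: "x \<in> lie_gen n X \<Longrightarrow> y \<in> lie_gen n X \<Longrightarrow> x + y \<in> lie_gen n X"
| bracket: "x \<in> lie_gen n X \<Longrightarrow> y \<in> lie_gen n X \<Longrightarrow> commutator x y \<in> lie_gen n X"

text \<open>Edge-colored multigraphs on node set {0..<n}. An edge is (endpoint set, colour);
  the endpoint set is {i,j} (a singleton {i} for a self-loop).\<close>
datatype color = Blue | Red | Green

type_synonym edge = "nat set \<times> color"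

definition edges_S :: "gen set \<Rightarrow> edge set" where
  "edges_S S =
     {({i,j}, Blue) | i j. GB i j \<in> S} \<union>
     {({i,j}, Red) | i j. GC i j \<in> S} \<union>
     {({i}, Green) | i j. GD i j \<in> S} \<union>
     {({j}, Green) | i j. GD i j \<in> S}"

definition edges_A :: "nat \<Rightarrow> complex mat \<Rightarrow> edge set" where
  "edges_A n A =
     {({i,j}, Blue) | i j. i < n \<and> j < n \<and> i \<noteq> j \<and> Re (A $$ (i,j)) \<noteq> 0} \<union>
     {({i,j}, Red) | i j. i < n \<and> j < n \<and> i \<noteq> j \<and> Im (A $$ (i,j)) \<noteq> 0} \<union>
     {({i}, Green) | i. i < n \<and> A $$ (i,i) \<noteq> 0}"

definition adj :: "edge set \<Rightarrow> nat \<Rightarrow> nat \<Rightarrow> bool" where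
  "adj E u v = (\<exists>c. ({u,v}, c) \<in> E)"

definition reach :: "edge set \<Rightarrow> nat \<Rightarrow> nat \<Rightarrow> bool" where
  "reach E = (adj E)\<^sup>*\<^sup>*"

definition component :: "nat \<Rightarrow> edge set \<Rightarrow> nat \<Rightarrow> nat set" where
  "component n E v = {u. u < n \<and> reach E v u}"

definition connected_graph :: "nat \<Rightarrow> edge set \<Rightarrow> bool" where
  "connected_graph n E = (\<forall>u<n. \<forall>v<n. reach E u v)"

definition no_multi_edges :: "edge set \<Rightarrow> bool" where
  "no_multi_edges E = (\<forall>e c1 c2. (e, c1) \<in> E \<longrightarrow> (e, c2) \<in> E \<longrightarrow> c1 = c2)"

definition has_self_loop :: "edge set \<Rightarrow> bool" where
  "has_self_loop E = (\<exists>i c. ({i}, c) \<in> E)"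

definition closed_walk :: "edge set \<Rightarrow> nat list \<Rightarrow> color list \<Rightarrow> bool" where
  "closed_walk E vs cs =
     (length vs = Suc (length cs) \<and> hd vs = last vs \<and>
      (\<forall>t<length cs. ({vs ! t, vs ! Suc t}, cs ! t) \<in> E))"

definition has_odd_red_cycle :: "edge set \<Rightarrow> bool" where
  "has_odd_red_cycle E =
     (\<exists>vs cs. closed_walk E vs cs \<and> odd (length (filter (\<lambda>c. c = Red) cs)))"

end

theory Submission
  imports Defs
begin

text \<open>Write \<open>G\<^sub>c(a,b)\<close> for \<open>B\<^sub>a\<^sub>b\<close> if the colour \<open>c\<close> is Blue and for \<open>C\<^sub>a\<^sub>b\<close> if it is Red.
  The bracket of \<open>G\<^sub>c(u,v)\<close> and \<open>G\<^sub>d(v,w)\<close> is \<open>\<plusminus>G\<^sub>c\<^sub>+\<^sub>d(u,w)\<close>, colours added modulo 2. So if every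
  edge of \<open>\<G>\<^sub>A \<union> \<G>\<^sub>S\<close> yields its generator in the Lie algebra \<open>L\<close>, connectivity gives a
  generator of some colour on every pair of nodes, and a self-loop or a closed walk with an odd
  number of Red edges gives both colours on one pair; then all \<open>B\<^sub>a\<^sub>b\<close>, \<open>C\<^sub>a\<^sub>b\<close>, hence all
  \<open>D\<^sub>a\<^sub>b = [B\<^sub>a\<^sub>b, C\<^sub>a\<^sub>b]/2\<close> and all of \<open>su(n)\<close>, lie in \<open>L\<close>.

  An edge \<open>{k,l}\<close> of \<open>\<G>\<^sub>A\<close> is extracted from
  \<open>A\<close> with double commutators \<open>ad\<^sub>G\<^sup>2\<close>. If \<open>k\<close>, \<open>l\<close> lie in one component of \<open>\<G>\<^sub>S\<close>, some
  \<open>G\<^sub>d(k,l)\<close> is already in \<open>L\<close>, and \<open>ad\<^sub>G\<^sup>2 A + ad\<^sub>G\<^sup>4 A\<close> projects the \<open>{k,l}\<close> block of \<open>A\<close> onto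
  the orthogonal complement of \<open>G\<^sub>d(k,l)\<close> in \<open>su(2)\<close>; the projection is nonzero when the
  edge has the other colour, and a bracket with \<open>G\<^sub>d(k,l)\<close> rotates it onto that colour. Otherwise
  the components of \<open>k\<close> and \<open>l\<close> are disjoint and each contains a path of length two; four
  double commutators with generators along these paths cut \<open>A\<close> down to its \<open>(k,l)\<close>, \<open>(l,k)\<close>
  entries, a real multiple of a single generator since \<open>\<G>\<^sub>A\<close> has no multi-edges.\<close>

section \<open>Off-diagonal generators\<close>

definition coeff_ab :: "bool \<Rightarrow> complex" where
  "coeff_ab red = (if red then \<i> else 1)"

definition coeff_ba :: "bool \<Rightarrow> complex" where
  "coeff_ba red = (if red then \<i> else -1)"

text \<open>\<open>offdiag_gen n False a b\<close> is \<open>B\<^sub>a\<^sub>b\<close> and \<open>offdiag_gen n True a b\<close> is \<open>C\<^sub>a\<^sub>b\<close>: the flag says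
  whether the corresponding edge is Red.\<close>

definition offdiag_gen :: "nat \<Rightarrow> bool \<Rightarrow> nat \<Rightarrow> nat \<Rightarrow> complex mat" where
  "offdiag_gen n red a b = mat n n (\<lambda>(r,s).
     if r = a \<and> s = b then coeff_ab red else if r = b \<and> s = a then coeff_ba red else 0)"

lemma offdiag_gen_carrier [simp]: "offdiag_gen n red a b \<in> carrier_mat n n"
  and offdiag_gen_dim [simp]: "dim_row (offdiag_gen n red a b) = n" "dim_col (offdiag_gen n red a b) = n"
  by (simp_all add: offdiag_gen_def)

lemma offdiag_gen_index:
  "r < n \<Longrightarrow> s < n \<Longrightarrow> offdiag_gen n red a b $$ (r,s) =
     (if r = a \<and> s = b then coeff_ab red else if r = b \<and> s = a then coeff_ba red else 0)"
  by (simp add: offdiag_gen_def)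

lemma gen_mat_GB: "a < n \<Longrightarrow> b < n \<Longrightarrow> a \<noteq> b \<Longrightarrow> gen_mat n (GB a b) = offdiag_gen n False a b"
  and gen_mat_GC: "a < n \<Longrightarrow> b < n \<Longrightarrow> a \<noteq> b \<Longrightarrow> gen_mat n (GC a b) = offdiag_gen n True a b"
  by (rule eq_matI) (auto simp: Emat_def offdiag_gen_index coeff_ab_def coeff_ba_def)

lemma gen_mat_carrier [simp]: "gen_mat n g \<in> carrier_mat n n"
  by (cases g) (auto simp: Emat_def)

lemma gen_mat_dim [simp]: "dim_row (gen_mat n g) = n" "dim_col (gen_mat n g) = n"
  using carrier_matD[OF gen_mat_carrier] by auto

lemma gen_mat_GD_index:
  "r < n \<Longrightarrow> s < n \<Longrightarrow> a \<noteq> b \<Longrightarrow> gen_mat n (GD a b) $$ (r,s) =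
     (if r = s \<and> r = a then \<i> else if r = s \<and> r = b then - \<i> else 0)"
  by (simp add: Emat_def)

declare gen_mat.simps [simp del]

lemma offdiag_gen_mult_index:
  assumes "M \<in> carrier_mat n n" "r < n" "s < n" "a < n" "b < n" "a \<noteq> b"
  shows "(offdiag_gen n red a b * M) $$ (r,s) =
     (if r = a then coeff_ab red * M $$ (b,s) else if r = b then coeff_ba red * M $$ (a,s) else 0)"
  using assms by (auto simp: scalar_prod_def offdiag_gen_index if_distrib[of "\<lambda>x. x * _"] sum.If_cases
    cong: if_cong)

lemma mult_offdiag_gen_index:
  assumes "M \<in> carrier_mat n n" "r < n" "s < n" "a < n" "b < n" "a \<noteq> b"
  shows "(M * offdiag_gen n red a b) $$ (r,s) =
     (if s = b then coeff_ab red * M $$ (r,a) else if s = a then coeff_ba red * M $$ (r,b) else 0)"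
  using assms by (auto simp: scalar_prod_def offdiag_gen_index if_distrib[of "\<lambda>x. _ * x"] sum.If_cases
    cong: if_cong)

lemma commutator_carrier [simp]:
  "X \<in> carrier_mat n n \<Longrightarrow> Y \<in> carrier_mat n n \<Longrightarrow> commutator X Y \<in> carrier_mat n n"
  unfolding commutator_def by auto

lemma commutator_dim [simp]:
  "dim_row (commutator X Y) = dim_row Y" "dim_col (commutator X Y) = dim_col X"
  by (simp_all add: commutator_def)

lemma commutator_index:
  "X \<in> carrier_mat n n \<Longrightarrow> Y \<in> carrier_mat n n \<Longrightarrow> r < n \<Longrightarrow> s < n \<Longrightarrow>
   commutator X Y $$ (r,s) = (X * Y) $$ (r,s) - (Y * X) $$ (r,s)"
  unfolding commutator_def by (subst index_minus_mat) auto

lemma commutator_offdiag_gen_index: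
  assumes "M \<in> carrier_mat n n" "r < n" "s < n" "a < n" "b < n" "a \<noteq> b"
  shows "commutator (offdiag_gen n red a b) M $$ (r,s) =
     (if r = a then coeff_ab red * M $$ (b,s) else if r = b then coeff_ba red * M $$ (a,s) else 0) -
     (if s = b then coeff_ab red * M $$ (r,a) else if s = a then coeff_ba red * M $$ (r,b) else 0)"
  unfolding commutator_index[OF offdiag_gen_carrier assms(1-3)]
    offdiag_gen_mult_index[OF assms] mult_offdiag_gen_index[OF assms] ..

lemma coeff_products [simp]:
  "coeff_ab red * (coeff_ba red * x) = - x" "coeff_ba red * (coeff_ab red * x) = - x"
  "coeff_ab red * (coeff_ab red * x) = coeff_ab red ^ 2 * x"
  "coeff_ba red * (coeff_ba red * x) = coeff_ab red ^ 2 * x"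
  by (simp_all add: coeff_ab_def coeff_ba_def power2_eq_square)

lemma commutator_offdiag_gen_chain:
  assumes "u < n" "v < n" "w < n" "u \<noteq> v" "v \<noteq> w" "u \<noteq> w"
  shows "commutator (offdiag_gen n red1 u v) (offdiag_gen n red2 v w) =
     complex_of_real (if red1 \<and> red2 then -1 else 1) \<cdot>\<^sub>m offdiag_gen n (red1 \<noteq> red2) u w"
  by (rule eq_matI)
     (use assms in \<open>auto simp: commutator_offdiag_gen_index offdiag_gen_index coeff_ab_def coeff_ba_def\<close>)

lemma offdiag_gen_swap:
  "a < n \<Longrightarrow> b < n \<Longrightarrow> a \<noteq> b \<Longrightarrow>
   offdiag_gen n red b a = complex_of_real (if red then 1 else -1) \<cdot>\<^sub>m offdiag_gen n red a b"
  by (rule eq_matI) (auto simp: offdiag_gen_index coeff_ab_def coeff_ba_def)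

lemma commutator_offdiag_gen_GB_GC:
  "a < n \<Longrightarrow> b < n \<Longrightarrow> a \<noteq> b \<Longrightarrow>
   commutator (offdiag_gen n False a b) (offdiag_gen n True a b) = 2 \<cdot>\<^sub>m gen_mat n (GD a b)"
  by (rule eq_matI)
     (auto simp: commutator_offdiag_gen_index offdiag_gen_index gen_mat_GD_index coeff_ab_def
       coeff_ba_def)

section \<open>Double commutators\<close>

definition ad_sq :: "complex mat \<Rightarrow> complex mat \<Rightarrow> complex mat" where
  "ad_sq Y M = commutator Y (commutator Y M)"

lemma ad_sq_carrier [simp]:
  "Y \<in> carrier_mat n n \<Longrightarrow> M \<in> carrier_mat n n \<Longrightarrow> ad_sq Y M \<in> carrier_mat n n"
  by (simp add: ad_sq_def)

lemma ad_sq_dim [simp]: "dim_row (ad_sq Y M) = dim_row M" "dim_col (ad_sq Y M) = dim_col Y"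
  by (simp_all add: ad_sq_def)

lemma ad_sq_offdiag_gen_index:
  assumes M: "M \<in> carrier_mat n n" and rs: "r < n" "s < n" and ab: "a < n" "b < n" "a \<noteq> b"
  shows "ad_sq (offdiag_gen n red a b) M $$ (r,s) =
    (if r = a \<and> s = a then 2 * M $$ (b,b) - 2 * M $$ (a,a)
     else if r = b \<and> s = b then 2 * M $$ (a,a) - 2 * M $$ (b,b)
     else if r = a \<and> s = b then - 2 * M $$ (a,b) - 2 * coeff_ab red ^ 2 * M $$ (b,a)
     else if r = b \<and> s = a then - 2 * M $$ (b,a) - 2 * coeff_ab red ^ 2 * M $$ (a,b)
     else if r = a \<or> r = b \<or> s = a \<or> s = b then - M $$ (r,s) else 0)"
proof -
  let ?C = "commutator (offdiag_gen n red a b) M"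
  have C: "?C $$ (x,z) =
     (if x = a then coeff_ab red * M $$ (b,z) else if x = b then coeff_ba red * M $$ (a,z) else 0) -
     (if z = b then coeff_ab red * M $$ (x,a) else if z = a then coeff_ba red * M $$ (x,b) else 0)"
    if "x < n" "z < n" for x z
    using commutator_offdiag_gen_index[OF M that ab] .
  have "?C \<in> carrier_mat n n" using M by simp
  from commutator_offdiag_gen_index[OF this rs ab] show ?thesis
    unfolding ad_sq_def using ab rs
    by (cases "r = a"; cases "r = b"; cases "s = a"; cases "s = b")
       (simp_all add: C right_diff_distrib)
qed

definition mask_mat :: "(nat \<times> nat) set \<Rightarrow> complex mat \<Rightarrow> complex mat" where
  "mask_mat P M = mat (dim_row M) (dim_col M) (\<lambda>ij. if ij \<in> P then M $$ ij else 0)"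

lemma mask_mat_carrier [simp]: "M \<in> carrier_mat n n \<Longrightarrow> mask_mat P M \<in> carrier_mat n n"
  and mask_mat_dim [simp]: "dim_row (mask_mat P M) = dim_row M" "dim_col (mask_mat P M) = dim_col M"
  by (auto simp: mask_mat_def)

lemma mask_mat_index [simp]:
  "i < dim_row M \<Longrightarrow> j < dim_col M \<Longrightarrow> mask_mat P M $$ (i,j) = (if (i,j) \<in> P then M $$ (i,j) else 0)"
  by (simp add: mask_mat_def)

lemma mask_mat_mask_mat [simp]: "mask_mat P (mask_mat Q M) = mask_mat (P \<inter> Q) M"
  by (rule eq_matI) auto

lemma mask_mat_split: "M = mask_mat (- P) M + mask_mat P M"
  by (rule eq_matI) auto

lemma mask_mat_offdiag_pair:
  assumes M: "M \<in> carrier_mat n n" and rs: "r < n" "s < n" "r \<noteq> s"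
    and skew: "M $$ (s,r) = - cnj (M $$ (r,s))"
  shows "mask_mat {(r,s),(s,r)} M =
    complex_of_real (Re (M $$ (r,s))) \<cdot>\<^sub>m offdiag_gen n False r s +
    complex_of_real (Im (M $$ (r,s))) \<cdot>\<^sub>m offdiag_gen n True r s"
  by (rule eq_matI)
     (use assms in \<open>auto simp: offdiag_gen_index coeff_ab_def coeff_ba_def complex_eq_iff\<close>)

lemma ad_sq_offdiag_gen_vanishing_block:
  assumes M: "M \<in> carrier_mat n n" and ab: "a < n" "b < n" "a \<noteq> b"
    and block: "\<forall>r\<in>{a,b}. \<forall>s\<in>{a,b}. M $$ (r,s) = 0"
  shows "ad_sq (offdiag_gen n red a b) M = - mask_mat {(r,s). (r \<in> {a,b}) \<noteq> (s \<in> {a,b})} M"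
  by (rule eq_matI) (use assms in \<open>auto simp: ad_sq_offdiag_gen_index\<close>)

lemma add_ad_sq_offdiag_gen_vanishing_block:
  assumes M: "M \<in> carrier_mat n n" and ab: "a < n" "b < n" "a \<noteq> b"
    and block: "\<forall>r\<in>{a,b}. \<forall>s\<in>{a,b}. M $$ (r,s) = 0"
  shows "M + ad_sq (offdiag_gen n red a b) M = mask_mat {(r,s). r \<notin> {a,b} \<and> s \<notin> {a,b}} M"
  unfolding ad_sq_offdiag_gen_vanishing_block[OF assms]
  by (rule eq_matI) (use assms in auto)

lemma ad_sq_ad_sq_offdiag_gen_disjoint:
  assumes A: "A \<in> carrier_mat n n" and idx: "k < n" "k' < n" "l < n" "l' < n" "k \<noteq> k'" "l \<noteq> l'"
    and disj: "{k,k'} \<inter> {l,l'} = {}"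
  shows "ad_sq (offdiag_gen n red2 l l') (ad_sq (offdiag_gen n red1 k k') A) =
    mask_mat ({k,k'} \<times> {l,l'} \<union> {l,l'} \<times> {k,k'}) A"
proof -
  define K where "K = {k,k'}"
  define L where "L = {l,l'}"
  let ?N = "ad_sq (offdiag_gen n red1 k k') A"
  have N: "?N \<in> carrier_mat n n" using A by simp
  have N_index: "?N $$ (r,s) = (if r \<in> K \<or> s \<in> K then - A $$ (r,s) else 0)"
    if "r < n" "s < n" "r \<notin> K \<or> s \<notin> K" for r s
    using ad_sq_offdiag_gen_index[OF A that(1,2) idx(1,2,5)] that(3) unfolding K_def by auto
  have disj': "r \<in> K \<Longrightarrow> r \<notin> L" "r \<in> L \<Longrightarrow> r \<notin> K" for r
    using disj unfolding K_def L_def by blast+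
  have lK: "l \<notin> K" "l' \<notin> K" using disj unfolding K_def by auto
  have "\<forall>r\<in>{l,l'}. \<forall>s\<in>{l,l'}. ?N $$ (r,s) = 0"
    using idx lK by (auto simp: N_index)
  note cross = ad_sq_offdiag_gen_vanishing_block[OF N idx(3,4,6) this]
  show ?thesis
    unfolding cross K_def[symmetric] L_def[symmetric]
  proof (rule eq_matI)
    fix r s assume "r < dim_row (mask_mat (K \<times> L \<union> L \<times> K) A)" "s < dim_col (mask_mat (K \<times> L \<union> L \<times> K) A)"
    then have rs: "r < n" "s < n" using A by auto
    show "(- mask_mat {(r,s). (r \<in> L) \<noteq> (s \<in> L)} ?N) $$ (r,s) = mask_mat (K \<times> L \<union> L \<times> K) A $$ (r,s)"
    proof (cases "(r,s) \<in> K \<times> L \<union> L \<times> K")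
      case True
      then have "(r \<in> L) \<noteq> (s \<in> L)" "r \<notin> K \<or> s \<notin> K" "r \<in> K \<or> s \<in> K" using disj' by blast+
      then show ?thesis using True rs A by (simp add: N_index)
    next
      case False
      have "?N $$ (r,s) = 0" if "(r \<in> L) \<noteq> (s \<in> L)"
      proof -
        have "r \<notin> K" "s \<notin> K" using False that disj' by blast+
        then show ?thesis using rs by (simp add: N_index)
      qed
      then show ?thesis using rs A False by auto
    qed
  qed (use A in auto)
qed

text \<open>On the \<open>{a,b}\<close> block, \<open>ad\<^sub>G\<^sup>2\<close> acts as \<open>-4\<close> on the orthogonal complement of \<open>G\<close> in
  \<open>su(2)\<close>; on the other entries of rows and columns \<open>a\<close>, \<open>b\<close> it acts as \<open>-1\<close>. Hence
  \<open>ad\<^sub>G\<^sup>2 + ad\<^sub>G\<^sup>4\<close> keeps twelve times the former and nothing else.\<close>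

lemma ad_sq_add_ad_sq_ad_sq_offdiag_gen:
  assumes M: "M \<in> carrier_mat n n" and ab: "a < n" "b < n" "a \<noteq> b"
    and skew: "M $$ (b,a) = - cnj (M $$ (a,b))" "Re (M $$ (a,a)) = 0" "Re (M $$ (b,b)) = 0"
  shows "ad_sq (offdiag_gen n red a b) M +
      ad_sq (offdiag_gen n red a b) (ad_sq (offdiag_gen n red a b) M) =
    complex_of_real (6 * (Im (M $$ (a,a)) - Im (M $$ (b,b)))) \<cdot>\<^sub>m gen_mat n (GD a b) +
    complex_of_real (12 * (if red then Re (M $$ (a,b)) else Im (M $$ (a,b)))) \<cdot>\<^sub>m
      offdiag_gen n (\<not> red) a b"
    (is "?L = ?R")
proof (rule eq_matI)
  have Z: "ad_sq (offdiag_gen n red a b) M \<in> carrier_mat n n" using M by simp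
  fix r s assume "r < dim_row ?R" "s < dim_col ?R"
  then have rs: "r < n" "s < n" by auto
  show "?L $$ (r,s) = ?R $$ (r,s)"
    using rs ab skew M Z
    by (cases "r = a"; cases "r = b"; cases "s = a"; cases "s = b")
       (simp_all add: ad_sq_offdiag_gen_index gen_mat_GD_index offdiag_gen_index coeff_ab_def
         coeff_ba_def complex_eq_iff)
qed (use M in auto)

lemma offdiag_gen_rotation:
  fixes x y :: real and red :: bool
  assumes ab: "a < n" "b < n" "a \<noteq> b"
  defines "W \<equiv> complex_of_real x \<cdot>\<^sub>m gen_mat n (GD a b) +
    complex_of_real y \<cdot>\<^sub>m offdiag_gen n (\<not> red) a b"
  shows "complex_of_real y \<cdot>\<^sub>m W +
      complex_of_real (if red then x / 2 else - x / 2) \<cdot>\<^sub>m commutator (offdiag_gen n red a b) W =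
    complex_of_real (x\<^sup>2 + y\<^sup>2) \<cdot>\<^sub>m offdiag_gen n (\<not> red) a b"
    (is "?L = ?R")
proof (rule eq_matI)
  have W: "W \<in> carrier_mat n n" by (simp add: W_def)
  fix r s assume "r < dim_row ?R" "s < dim_col ?R"
  then have rs: "r < n" "s < n" by auto
  show "?L $$ (r,s) = ?R $$ (r,s)"
    using rs ab W
    by (cases "r = a"; cases "r = b"; cases "s = a"; cases "s = b")
       (simp_all add: W_def commutator_offdiag_gen_index gen_mat_GD_index offdiag_gen_index coeff_ab_def
         coeff_ba_def complex_eq_iff power2_eq_square algebra_simps)
qed (simp_all add: W_def)

section \<open>The special unitary algebra\<close>

lemma su_iff:
  "A \<in> su n \<longleftrightarrow> A \<in> carrier_mat n n \<and> (\<forall>i<n. \<forall>j<n. cnj (A $$ (i,j)) = - A $$ (j,i)) \<and>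
     (\<Sum>i<n. A $$ (i,i)) = 0"
proof -
  have "(A $$ (i,j) = - cnj (A $$ (j,i))) \<longleftrightarrow> (cnj (A $$ (j,i)) = - A $$ (i,j))" for i j
    by (metis minus_equation_iff)
  then show ?thesis unfolding su_def by auto
qed

lemma su_cnj_index: "X \<in> su n \<Longrightarrow> i < n \<Longrightarrow> j < n \<Longrightarrow> cnj (X $$ (i,j)) = - X $$ (j,i)"
  by (simp add: su_iff)

lemma su_skew_index: "M \<in> su n \<Longrightarrow> i < n \<Longrightarrow> j < n \<Longrightarrow> M $$ (j,i) = - cnj (M $$ (i,j))"
  using su_cnj_index[of M n i j] by simp

lemma su_Re_diag: "M \<in> su n \<Longrightarrow> i < n \<Longrightarrow> Re (M $$ (i,i)) = 0"
  using su_cnj_index[of M n i i] by (simp add: complex_eq_iff)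

lemma su_zero: "0\<^sub>m n n \<in> su n"
  by (simp add: su_iff)

lemma su_add: "X \<in> su n \<Longrightarrow> Y \<in> su n \<Longrightarrow> X + Y \<in> su n"
  by (auto simp: su_iff sum.distrib)

lemma su_smult:
  assumes "X \<in> su n" shows "complex_of_real c \<cdot>\<^sub>m X \<in> su n"
proof -
  have "(\<Sum>i<n. complex_of_real c * X $$ (i,i)) = complex_of_real c * (\<Sum>i<n. X $$ (i,i))"
    by (simp add: sum_distrib_left)
  then show ?thesis using assms by (auto simp: su_iff)
qed

lemma su_cnj_mult_index:
  assumes P: "P \<in> su n" and Q: "Q \<in> su n" and ij: "i < n" "j < n"
  shows "cnj ((P * Q) $$ (j,i)) = (Q * P) $$ (i,j)"
proof -
  have Pc: "P \<in> carrier_mat n n" and Qc: "Q \<in> carrier_mat n n" using P Q by (simp_all add: su_iff)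
  have "cnj ((P * Q) $$ (j,i)) = (\<Sum>k<n. cnj (P $$ (j,k)) * cnj (Q $$ (k,i)))"
    using Pc Qc ij by (simp add: scalar_prod_def atLeast0LessThan cnj_sum)
  also have "\<dots> = (\<Sum>k<n. Q $$ (i,k) * P $$ (k,j))"
    using P Q ij by (intro sum.cong) (simp_all add: su_cnj_index mult.commute)
  also have "\<dots> = (Q * P) $$ (i,j)"
    using Pc Qc ij by (simp add: scalar_prod_def atLeast0LessThan)
  finally show ?thesis .
qed

lemma su_commutator:
  assumes X: "X \<in> su n" and Y: "Y \<in> su n"
  shows "commutator X Y \<in> su n"
proof -
  have Xc: "X \<in> carrier_mat n n" and Yc: "Y \<in> carrier_mat n n" using X Y by (auto simp: su_iff)
  have skew: "cnj (commutator X Y $$ (i,j)) = - commutator X Y $$ (j,i)" if "i < n" "j < n" for i j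
    unfolding commutator_index[OF Xc Yc that] commutator_index[OF Xc Yc that(2,1)] complex_cnj_diff
      su_cnj_mult_index[OF X Y that(2,1)] su_cnj_mult_index[OF Y X that(2,1)] by simp
  have diag: "commutator X Y $$ (i,i) = (\<Sum>k<n. X $$ (i,k) * Y $$ (k,i)) - (\<Sum>k<n. Y $$ (i,k) * X $$ (k,i))"
    if "i < n" for i
    using that Xc Yc by (simp add: commutator_index scalar_prod_def atLeast0LessThan)
  have "(\<Sum>i<n. \<Sum>k<n. Y $$ (i,k) * X $$ (k,i)) = (\<Sum>i<n. \<Sum>k<n. X $$ (i,k) * Y $$ (k,i))"
    by (subst sum.swap) (simp add: mult.commute)
  then have "(\<Sum>i<n. commutator X Y $$ (i,i)) = 0"
    by (simp add: diag sum_subtractf)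
  then show ?thesis
    using Xc Yc skew by (simp add: su_iff)
qed

lemma offdiag_gen_su: "a < n \<Longrightarrow> b < n \<Longrightarrow> a \<noteq> b \<Longrightarrow> offdiag_gen n red a b \<in> su n"
  by (auto simp: su_iff offdiag_gen_index coeff_ab_def coeff_ba_def intro!: sum.neutral)

lemma gen_mat_GD_su: "a < n \<Longrightarrow> b < n \<Longrightarrow> a \<noteq> b \<Longrightarrow> gen_mat n (GD a b) \<in> su n"
  by (auto simp: su_iff gen_mat_GD_index sum.If_cases)

lemma gen_mat_su: "valid_gen n g \<Longrightarrow> gen_mat n g \<in> su n"
  by (cases g)
     (auto simp: valid_gen_def gen_mat_GB gen_mat_GC offdiag_gen_su gen_mat_GD_su)

lemma su_mask_mat:
  assumes "M \<in> su n" "sym P" "Id \<subseteq> P"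
  shows "mask_mat P M \<in> su n"
proof -
  have "(\<Sum>i<n. mask_mat P M $$ (i,i)) = (\<Sum>i<n. M $$ (i,i))"
    using assms by (intro sum.cong) (auto simp: su_iff)
  then show ?thesis
    using assms by (auto simp: su_iff dest: symD)
qed

lemma su_diagonal_not_constant:
  assumes A: "A \<in> su n" and i: "i < n" "A $$ (i,i) \<noteq> 0"
  obtains j where "j < n" "Im (A $$ (i,i)) \<noteq> Im (A $$ (j,j))"
proof (rule ccontr)
  assume "\<not> thesis"
  with that have "A $$ (j,j) = A $$ (i,i)" if "j < n" for j
    using su_Re_diag[OF A] i(1) that by (metis complex_eq_iff)
  then have "(\<Sum>j<n. A $$ (j,j)) = of_nat n * A $$ (i,i)" by simp
  with A i show False by (simp add: su_iff)
qed

section \<open>The generated Lie algebra\<close>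

lemma lie_gen_carrier: "x \<in> lie_gen n X \<Longrightarrow> x \<in> carrier_mat n n"
  by (induction rule: lie_gen.induct) auto

lemma lie_gen_smult_cancel:
  assumes "complex_of_real c \<cdot>\<^sub>m x \<in> lie_gen n X" "c \<noteq> 0" "x \<in> carrier_mat n n"
  shows "x \<in> lie_gen n X"
proof -
  have "complex_of_real (1 / c) \<cdot>\<^sub>m (complex_of_real c \<cdot>\<^sub>m x) \<in> lie_gen n X"
    using assms(1) by (rule lie_gen.smult)
  also have "complex_of_real (1 / c) \<cdot>\<^sub>m (complex_of_real c \<cdot>\<^sub>m x) = x"
    by (rule eq_matI) (use assms(2,3) in auto)
  finally show ?thesis .
qed

lemma ad_sq_in_lie_gen: "Y \<in> lie_gen n X \<Longrightarrow> M \<in> lie_gen n X \<Longrightarrow> ad_sq Y M \<in> lie_gen n X"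
  unfolding ad_sq_def by (intro lie_gen.bracket)

lemma offdiag_gen_chain_in_lie_gen:
  assumes "offdiag_gen n red1 u v \<in> lie_gen n X" "offdiag_gen n red2 v w \<in> lie_gen n X"
    and "u < n" "v < n" "w < n" "u \<noteq> v" "v \<noteq> w" "u \<noteq> w"
  shows "offdiag_gen n (red1 \<noteq> red2) u w \<in> lie_gen n X"
proof (rule lie_gen_smult_cancel)
  show "complex_of_real (if red1 \<and> red2 then -1 else 1) \<cdot>\<^sub>m offdiag_gen n (red1 \<noteq> red2) u w \<in> lie_gen n X"
    unfolding commutator_offdiag_gen_chain[OF assms(3-8), symmetric]
    using assms(1,2) by (rule lie_gen.bracket)
qed auto

lemma offdiag_gen_swap_in_lie_gen:
  assumes "offdiag_gen n red a b \<in> lie_gen n X" "a < n" "b < n" "a \<noteq> b"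
  shows "offdiag_gen n red b a \<in> lie_gen n X"
  unfolding offdiag_gen_swap[OF assms(2-4)] using assms(1) by (rule lie_gen.smult)

lemma gen_mat_GD_in_lie_gen:
  assumes "offdiag_gen n False a b \<in> lie_gen n X" "offdiag_gen n True a b \<in> lie_gen n X"
    and "a < n" "b < n" "a \<noteq> b"
  shows "gen_mat n (GD a b) \<in> lie_gen n X"
proof (rule lie_gen_smult_cancel)
  show "complex_of_real 2 \<cdot>\<^sub>m gen_mat n (GD a b) \<in> lie_gen n X"
    using commutator_offdiag_gen_GB_GC[OF assms(3-5)] lie_gen.bracket[OF assms(1,2)] by simp
qed simp_all

text \<open>The first two double commutators keep the entries between \<open>{k,k'}\<close> and \<open>{l,l'}\<close>; the
  last two delete the rows and columns \<open>k'\<close>, \<open>m\<close> and \<open>l'\<close>, \<open>p\<close>.\<close>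

lemma mask_mat_pair_in_lie_gen:
  assumes A: "A \<in> lie_gen n X"
    and gens: "offdiag_gen n red1 k k' \<in> lie_gen n X" "offdiag_gen n red2 k' m \<in> lie_gen n X"
      "offdiag_gen n red3 l l' \<in> lie_gen n X" "offdiag_gen n red4 l' p \<in> lie_gen n X"
    and idx: "k < n" "k' < n" "m < n" "l < n" "l' < n" "p < n"
    and dist: "distinct [k, k', m]" "distinct [l, l', p]" "{k, k', m} \<inter> {l, l', p} = {}"
  shows "mask_mat {(k,l),(l,k)} A \<in> lie_gen n X"
proof -
  have Ac: "A \<in> carrier_mat n n" using A by (rule lie_gen_carrier)
  define M1 where "M1 = ad_sq (offdiag_gen n red3 l l') (ad_sq (offdiag_gen n red1 k k') A)"
  define M2 where "M2 = M1 + ad_sq (offdiag_gen n red2 k' m) M1"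
  define M3 where "M3 = M2 + ad_sq (offdiag_gen n red4 l' p) M2"
  have "M3 \<in> lie_gen n X"
    unfolding M3_def M2_def M1_def using A gens by (intro lie_gen.add ad_sq_in_lie_gen)
  have M1: "M1 = mask_mat ({k,k'} \<times> {l,l'} \<union> {l,l'} \<times> {k,k'}) A"
    unfolding M1_def using Ac idx dist by (intro ad_sq_ad_sq_offdiag_gen_disjoint) auto
  have M2: "M2 = mask_mat (({k,k'} \<times> {l,l'} \<union> {l,l'} \<times> {k,k'}) \<inter> {(r,s). r \<notin> {k',m} \<and> s \<notin> {k',m}}) A"
    unfolding M2_def M1 using Ac idx dist
    by (subst add_ad_sq_offdiag_gen_vanishing_block) auto
  have M3: "M3 = mask_mat (({k,k'} \<times> {l,l'} \<union> {l,l'} \<times> {k,k'}) \<inter> {(r,s). r \<notin> {k',m} \<and> s \<notin> {k',m}}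
       \<inter> {(r,s). r \<notin> {l',p} \<and> s \<notin> {l',p}}) A"
    unfolding M3_def M2 using Ac idx dist
    by (subst add_ad_sq_offdiag_gen_vanishing_block) (auto simp: Int_assoc)
  also have "\<dots> = mask_mat {(k,l),(l,k)} A"
    using dist by (intro arg_cong[where f = "\<lambda>P. mask_mat P A"]) auto
  finally show ?thesis using \<open>M3 \<in> lie_gen n X\<close> by simp
qed

lemma other_colour_in_lie_gen:
  assumes G: "offdiag_gen n red a b \<in> lie_gen n X" and M: "M \<in> lie_gen n X"
    and ab: "a < n" "b < n" "a \<noteq> b"
    and skew: "M $$ (b,a) = - cnj (M $$ (a,b))" "Re (M $$ (a,a)) = 0" "Re (M $$ (b,b)) = 0"
    and nz: "Im (M $$ (a,a)) \<noteq> Im (M $$ (b,b)) \<or> (if red then Re (M $$ (a,b)) else Im (M $$ (a,b))) \<noteq> 0"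
  shows "offdiag_gen n (\<not> red) a b \<in> lie_gen n X"
proof -
  define x where "x = 6 * (Im (M $$ (a,a)) - Im (M $$ (b,b)))"
  define y where "y = 12 * (if red then Re (M $$ (a,b)) else Im (M $$ (a,b)))"
  define W where
    "W = complex_of_real x \<cdot>\<^sub>m gen_mat n (GD a b) + complex_of_real y \<cdot>\<^sub>m offdiag_gen n (\<not> red) a b"
  have "W \<in> lie_gen n X"
    using ad_sq_add_ad_sq_ad_sq_offdiag_gen[OF lie_gen_carrier[OF M] ab skew, of red] G M
    unfolding W_def x_def y_def by (metis lie_gen.add ad_sq_in_lie_gen)
  then have "complex_of_real y \<cdot>\<^sub>m W +
      complex_of_real (if red then x / 2 else - x / 2) \<cdot>\<^sub>m commutator (offdiag_gen n red a b) W \<in> lie_gen n X"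
    using G by (intro lie_gen.add lie_gen.smult lie_gen.bracket)
  then have "complex_of_real (x\<^sup>2 + y\<^sup>2) \<cdot>\<^sub>m offdiag_gen n (\<not> red) a b \<in> lie_gen n X"
    unfolding W_def offdiag_gen_rotation[OF ab] .
  moreover have "x \<noteq> 0 \<or> y \<noteq> 0"
    using nz by (auto simp: x_def y_def split: if_splits)
  then have "x\<^sup>2 + y\<^sup>2 \<noteq> 0"
    by (simp add: sum_power2_eq_zero_iff)
  ultimately show ?thesis by (rule lie_gen_smult_cancel) simp
qed

lemma offdiag_gen_in_lie_gen_if_entry:
  assumes G: "offdiag_gen n red' k l \<in> lie_gen n X" and M: "M \<in> lie_gen n X" "M \<in> su n"
    and kl: "k < n" "l < n" "k \<noteq> l"
    and entry: "(if red then Im (M $$ (k,l)) else Re (M $$ (k,l))) \<noteq> 0"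
  shows "offdiag_gen n red k l \<in> lie_gen n X"
proof (cases "red' = red")
  case False
  from other_colour_in_lie_gen[OF G M(1) kl su_skew_index[OF M(2) kl(1,2)] su_Re_diag[OF M(2) kl(1)]
      su_Re_diag[OF M(2) kl(2)]] entry False
  show ?thesis by (cases red) auto
qed (use G in simp)

lemma lie_gen_subset_su:
  assumes "X \<subseteq> su n"
  shows "lie_gen n X \<subseteq> su n"
proof
  fix x assume "x \<in> lie_gen n X"
  then show "x \<in> su n"
    by induction (use assms in \<open>auto intro: su_zero su_smult su_add su_commutator\<close>)
qed

text \<open>The entry \<open>(0,0)\<close> is left out: the trace condition determines it from the others.\<close>

definition nonzero_entries :: "nat \<Rightarrow> complex mat \<Rightarrow> (nat \<times> nat) set" where
  "nonzero_entries n M = {(r,s). r < n \<and> s < n \<and> M $$ (r,s) \<noteq> 0} - {(0,0)}"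

lemma finite_nonzero_entries: "finite (nonzero_entries n M)"
  by (rule finite_subset[of _ "{..<n} \<times> {..<n}"]) (auto simp: nonzero_entries_def)

lemma su_eq_zero_if_nonzero_entries_empty:
  assumes M: "M \<in> su n" and empty: "nonzero_entries n M = {}"
  shows "M = 0\<^sub>m n n"
proof -
  have zero: "M $$ (r,s) = 0" if "r < n" "s < n" "(r,s) \<noteq> (0,0)" for r s
    using empty that unfolding nonzero_entries_def by blast
  have origin: "M $$ (0,0) = 0" if "0 < n"
  proof -
    have "(\<Sum>i<n. M $$ (i,i)) = M $$ (0,0)"
      using that zero by (subst sum.remove[of _ 0]) auto
    then show ?thesis using M by (simp add: su_iff)
  qed
  show ?thesis
  proof (rule eq_matI)
    fix i j assume "i < dim_row (0\<^sub>m n n)" "j < dim_col (0\<^sub>m n n)"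
    then show "M $$ (i,j) = 0\<^sub>m n n $$ (i,j)"
      using origin zero by (cases "(i,j) = (0,0)") auto
  qed (use M in \<open>auto simp: su_iff\<close>)
qed

lemma su_split_offdiag_pair:
  assumes M: "M \<in> su n" and rs: "r < n" "s < n" "r \<noteq> s" "M $$ (r,s) \<noteq> 0"
    and gens: "offdiag_gen n False r s \<in> lie_gen n X" "offdiag_gen n True r s \<in> lie_gen n X"
  obtains M' Y where "M = M' + Y" "M' \<in> su n" "Y \<in> lie_gen n X"
    "nonzero_entries n M' \<subset> nonzero_entries n M"
proof -
  let ?P = "{(r,s),(s,r)}"
  have Mc: "M \<in> carrier_mat n n" using M by (simp add: su_iff)
  have "mask_mat ?P M \<in> lie_gen n X"
    unfolding mask_mat_offdiag_pair[OF Mc rs(1-3) su_skew_index[OF M rs(1,2)]]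
    using gens by (intro lie_gen.add lie_gen.smult)
  moreover have "mask_mat (- ?P) M \<in> su n"
    using M rs(3) by (intro su_mask_mat) (auto simp: sym_def)
  moreover have "nonzero_entries n (mask_mat (- ?P) M) \<subseteq> nonzero_entries n M - {(r,s)}"
    using Mc by (auto simp: nonzero_entries_def split: if_splits)
  then have "nonzero_entries n (mask_mat (- ?P) M) \<subset> nonzero_entries n M"
    using rs by (auto simp: nonzero_entries_def)
  ultimately show ?thesis using that mask_mat_split by blast
qed

lemma su_split_diagonal_entry:
  assumes M: "M \<in> su n" and r: "0 < r" "r < n" "M $$ (r,r) \<noteq> 0"
    and D: "gen_mat n (GD 0 r) \<in> lie_gen n X"
  obtains M' Y where "M = M' + Y" "M' \<in> su n" "Y \<in> lie_gen n X"
    "nonzero_entries n M' \<subset> nonzero_entries n M"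
proof -
  define c where "c = Im (M $$ (r,r))"
  define M' where "M' = M + complex_of_real c \<cdot>\<^sub>m gen_mat n (GD 0 r)"
  have Mc: "M \<in> carrier_mat n n" using M by (simp add: su_iff)
  have "M = M' + complex_of_real (- c) \<cdot>\<^sub>m gen_mat n (GD 0 r)"
    unfolding M'_def by (rule eq_matI) (use Mc in auto)
  moreover have "complex_of_real (- c) \<cdot>\<^sub>m gen_mat n (GD 0 r) \<in> lie_gen n X"
    using D by (rule lie_gen.smult)
  moreover have "M' \<in> su n"
    unfolding M'_def using M r by (intro su_add su_smult gen_mat_GD_su) auto
  moreover have "M' $$ (x,y) = (if (x,y) = (r,r) then 0 else M $$ (x,y))"
    if "x < n" "y < n" "(x,y) \<noteq> (0,0)" for x y
    using Mc r that su_Re_diag[OF M r(2)]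
    unfolding M'_def c_def by (auto simp: gen_mat_GD_index complex_eq_iff)
  then have "nonzero_entries n M' \<subseteq> nonzero_entries n M - {(r,r)}"
    using r(1) by (auto simp: nonzero_entries_def split: if_splits)
  then have "nonzero_entries n M' \<subset> nonzero_entries n M"
    using r by (auto simp: nonzero_entries_def)
  ultimately show ?thesis using that by blast
qed

lemma su_subset_lie_gen:
  assumes gens: "\<And>a b red. a < n \<Longrightarrow> b < n \<Longrightarrow> a \<noteq> b \<Longrightarrow> offdiag_gen n red a b \<in> lie_gen n X"
  shows "su n \<subseteq> lie_gen n X"
proof
  fix M assume "M \<in> su n"
  then show "M \<in> lie_gen n X"
  proof (induction M rule: measure_induct_rule[where f = "\<lambda>M. card (nonzero_entries n M)"])
    case (less M)
    have peel: "M \<in> lie_gen n X" if "M = M' + Y" "M' \<in> su n" "Y \<in> lie_gen n X"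
      "nonzero_entries n M' \<subset> nonzero_entries n M" for M' Y
      using that less.IH[of M'] psubset_card_mono[OF finite_nonzero_entries] lie_gen.add by metis
    consider (offdiag) r s where "r < n" "s < n" "r \<noteq> s" "M $$ (r,s) \<noteq> 0"
      | (diag) r where "0 < r" "r < n" "M $$ (r,r) \<noteq> 0"
      | (zero) "nonzero_entries n M = {}"
      unfolding nonzero_entries_def by fastforce
    then show ?case
    proof cases
      case offdiag
      with gens show ?thesis by (metis su_split_offdiag_pair[OF less.prems] peel)
    next
      case diag
      then have "gen_mat n (GD 0 r) \<in> lie_gen n X" using gens by (intro gen_mat_GD_in_lie_gen) auto
      with diag show ?thesis by (metis su_split_diagonal_entry[OF less.prems] peel)
    next
      case zero
      then show ?thesis using su_eq_zero_if_nonzero_entries_empty[OF less.prems] lie_gen.zero by simp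
    qed
  qed
qed

section \<open>Graphs whose edges lie in the Lie algebra\<close>

definition edges_realised :: "nat \<Rightarrow> complex mat set \<Rightarrow> edge set \<Rightarrow> bool" where
  "edges_realised n X E \<longleftrightarrow> (\<forall>u v c. ({u,v}, c) \<in> E \<longrightarrow> u < n \<and> v < n \<and>
     (if u = v then c = Green else c \<noteq> Green \<and> offdiag_gen n (c = Red) u v \<in> lie_gen n X))"

lemma edges_realisedD:
  assumes "edges_realised n X E" "({u,v}, c) \<in> E"
  shows "u < n" "v < n" "u = v \<Longrightarrow> c = Green" "u \<noteq> v \<Longrightarrow> c \<noteq> Green"
    "u \<noteq> v \<Longrightarrow> offdiag_gen n (c = Red) u v \<in> lie_gen n X"
  using assms unfolding edges_realised_def by metis+

lemma edges_realised_Un: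
  "edges_realised n X E \<Longrightarrow> edges_realised n X F \<Longrightarrow> edges_realised n X (E \<union> F)"
  unfolding edges_realised_def by blast

definition has_both_colours :: "nat \<Rightarrow> complex mat set \<Rightarrow> bool" where
  "has_both_colours n X \<longleftrightarrow> (\<exists>a<n. \<exists>b<n. a \<noteq> b \<and>
     offdiag_gen n False a b \<in> lie_gen n X \<and> offdiag_gen n True a b \<in> lie_gen n X)"

lemma has_both_coloursI:
  "offdiag_gen n red a b \<in> lie_gen n X \<Longrightarrow> offdiag_gen n (\<not> red) a b \<in> lie_gen n X \<Longrightarrow>
   a < n \<Longrightarrow> b < n \<Longrightarrow> a \<noteq> b \<Longrightarrow> has_both_colours n X"
  by (cases red) (auto simp: has_both_colours_def)

lemma reach_sym: "reach E u v \<Longrightarrow> reach E v u"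
  unfolding reach_def
proof (induction rule: rtranclp_induct)
  case (step y z)
  then show ?case
    by (metis adj_def converse_rtranclp_into_rtranclp insert_commute)
qed simp

lemma reach_offdiag_gen:
  assumes E: "edges_realised n X E" and u: "u < n" and "reach E u v" "u \<noteq> v"
  shows "\<exists>red. offdiag_gen n red u v \<in> lie_gen n X"
proof -
  have "v = u \<or> (\<exists>red. offdiag_gen n red u v \<in> lie_gen n X)"
    using \<open>reach E u v\<close> unfolding reach_def
  proof (induction rule: rtranclp_induct)
    case (step y z)
    then obtain c where yz: "({y,z}, c) \<in> E" by (auto simp: adj_def)
    note edge = edges_realisedD[OF E yz]
    show ?case
    proof (cases "y = z \<or> z = u")
      case False
      with step.IH obtain red where "y = u \<or> offdiag_gen n red u y \<in> lie_gen n X" by blast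
      then show ?thesis
        using offdiag_gen_chain_in_lie_gen[OF _ edge(5) u edge(1,2)] edge(5) False by blast
    qed (use step.IH in auto)
  qed simp
  then show ?thesis using assms by blast
qed

text \<open>The invariant of a walk from \<open>x\<close> to \<open>y\<close> whose number of Red edges has parity \<open>p\<close>.\<close>

definition red_parity_path :: "nat \<Rightarrow> complex mat set \<Rightarrow> nat \<Rightarrow> nat \<Rightarrow> bool \<Rightarrow> bool" where
  "red_parity_path n X x y p \<longleftrightarrow>
     (x = y \<and> \<not> p) \<or> (x \<noteq> y \<and> offdiag_gen n p x y \<in> lie_gen n X) \<or> has_both_colours n X"

lemma red_parity_path_step:
  assumes path: "red_parity_path n X x y p" and E: "edges_realised n X E" and yz: "({y,z}, c) \<in> E"
    and x: "x < n"
  shows "red_parity_path n X x z (p \<noteq> (c = Red))"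
proof -
  note edge = edges_realisedD[OF E yz]
  consider "y = z" | "x = y" "\<not> p" "y \<noteq> z" | "x \<noteq> y" "offdiag_gen n p x y \<in> lie_gen n X" "y \<noteq> z"
    | "has_both_colours n X"
    using path unfolding red_parity_path_def by blast
  then show ?thesis
  proof cases
    case 1
    then show ?thesis using path edge(3) by simp
  next
    case 2
    then show ?thesis using edge(5) by (simp add: red_parity_path_def)
  next
    case 3
    show ?thesis
    proof (cases "z = x")
      case True
      have "offdiag_gen n (c = Red) x y \<in> lie_gen n X"
        using offdiag_gen_swap_in_lie_gen[OF edge(5)] edge(1,2) 3 True by simp
      then show ?thesis
        using has_both_coloursI[of n _ x y X] 3 True x edge(1)
        by (cases p; cases "c = Red") (auto simp: red_parity_path_def)
    next
      case False
      then show ?thesis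
        using offdiag_gen_chain_in_lie_gen[OF 3(2) edge(5) x edge(1,2)] 3 by (simp add: red_parity_path_def)
    qed
  next
    case 4
    then show ?thesis by (simp add: red_parity_path_def)
  qed
qed

lemma closed_walk_odd_red_has_both_colours:
  assumes E: "edges_realised n X E" and walk: "closed_walk E vs cs"
    and odd: "odd (length (filter (\<lambda>c. c = Red) cs))"
  shows "has_both_colours n X"
proof -
  let ?parity = "\<lambda>t. odd (length (filter (\<lambda>c. c = Red) (take t cs)))"
  have len: "length vs = Suc (length cs)" and ends: "hd vs = last vs"
    and steps: "\<And>t. t < length cs \<Longrightarrow> ({vs ! t, vs ! Suc t}, cs ! t) \<in> E"
    using walk unfolding closed_walk_def by auto
  have "vs \<noteq> []" using len by auto
  then have closed: "vs ! length cs = vs ! 0"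
    using ends len by (simp add: hd_conv_nth last_conv_nth)
  have "cs \<noteq> []" using odd by auto
  then have x: "vs ! 0 < n" using edges_realisedD(1)[OF E steps[of 0]] by simp
  have "red_parity_path n X (vs ! 0) (vs ! t) (?parity t)" if "t \<le> length cs" for t
    using that
  proof (induction t)
    case 0
    then show ?case by (simp add: red_parity_path_def)
  next
    case (Suc t)
    have "?parity (Suc t) = (?parity t \<noteq> (cs ! t = Red))"
      using Suc.prems by (simp add: take_Suc_conv_app_nth)
    then show ?case
      using red_parity_path_step[OF Suc.IH E steps x] Suc.prems by simp
  qed
  from this[of "length cs"] show ?thesis
    using closed odd by (simp add: red_parity_path_def)
qed

lemma component_path_of_length_two:
  assumes E: "edges_realised n X E" and k: "k < n" and card: "card (component n E k) \<ge> 3"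
  obtains k' m red1 red2 where "k' < n" "m < n" "distinct [k, k', m]" "reach E k k'" "reach E k m"
    "offdiag_gen n red1 k k' \<in> lie_gen n X" "offdiag_gen n red2 k' m \<in> lie_gen n X"
proof -
  have "finite (component n E k)" unfolding component_def by simp
  moreover have "k \<in> component n E k" using k by (simp add: component_def reach_def)
  ultimately have "2 \<le> card (component n E k - {k})" using card by simp
  then obtain B where "B \<subseteq> component n E k - {k}" "card B = 2"
    by (rule obtain_subset_with_card_n)
  then obtain k' m where "k' \<in> component n E k - {k}" "m \<in> component n E k - {k}" "k' \<noteq> m"
    by (auto simp: card_2_iff)
  then have km: "k' < n" "m < n" "distinct [k, k', m]" "reach E k k'" "reach E k m"
    unfolding component_def by auto
  moreover obtain red1 where "offdiag_gen n red1 k k' \<in> lie_gen n X"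
    using reach_offdiag_gen[OF E k] km by auto
  moreover have "reach E k' m"
    using reach_sym[OF km(4)] km(5) unfolding reach_def by (rule rtranclp_trans)
  then obtain red2 where "offdiag_gen n red2 k' m \<in> lie_gen n X"
    using reach_offdiag_gen[OF E km(1)] km(3) by auto
  ultimately show ?thesis using that by blast
qed

lemma all_offdiag_gens_in_lie_gen:
  assumes pairs: "\<And>u v. u < n \<Longrightarrow> v < n \<Longrightarrow> u \<noteq> v \<Longrightarrow> \<exists>red. offdiag_gen n red u v \<in> lie_gen n X"
    and both: "has_both_colours n X"
    and ab: "a < n" "b < n" "a \<noteq> b"
  shows "offdiag_gen n red a b \<in> lie_gen n X"
proof -
  obtain a0 b0 where ab0: "a0 < n" "b0 < n" "a0 \<noteq> b0"
    and both0: "\<And>red. offdiag_gen n red a0 b0 \<in> lie_gen n X"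
    using both unfolding has_both_colours_def by (metis (full_types))
  have from_a0: "offdiag_gen n red a0 x \<in> lie_gen n X" if x: "x < n" "x \<noteq> a0" for x red
  proof (cases "x = b0")
    case False
    then obtain red' where "offdiag_gen n red' b0 x \<in> lie_gen n X" using pairs[OF ab0(2) x(1)] by metis
    from offdiag_gen_chain_in_lie_gen[OF both0[of "red \<noteq> red'"] this ab0(1,2) x(1) ab0(3)] False x
    show ?thesis by (cases red; cases red') simp_all
  qed (use both0 in simp)
  show ?thesis
  proof (cases "a = a0")
    case a: False
    show ?thesis
    proof (cases "b = a0")
      case True
      then show ?thesis
        using offdiag_gen_swap_in_lie_gen[OF from_a0[OF ab(1) a] ab0(1) ab(1)] a by simp
    next
      case b: False
      have "offdiag_gen n False a a0 \<in> lie_gen n X"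
        using offdiag_gen_swap_in_lie_gen[OF from_a0[OF ab(1) a] ab0(1) ab(1)] a by simp
      from offdiag_gen_chain_in_lie_gen[OF this from_a0[OF ab(2) b] ab(1) ab0(1) ab(2) a] b ab(3)
      show ?thesis by simp
    qed
  qed (use from_a0 ab in simp)
qed

lemma offdiag_gen_in_lie_gen_if_isolated_entry:
  assumes E: "edges_realised n X E"
    and comp: "card (component n E k) \<ge> 3" "card (component n E l) \<ge> 3" and apart: "\<not> reach E k l"
    and M: "M \<in> lie_gen n X" "M \<in> su n" and kl: "k < n" "l < n"
    and pure: "(if red then Re (M $$ (k,l)) else Im (M $$ (k,l))) = 0"
    and entry: "(if red then Im (M $$ (k,l)) else Re (M $$ (k,l))) \<noteq> 0"
  shows "offdiag_gen n red k l \<in> lie_gen n X"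
proof -
  obtain k' m red1 red2 where K: "k' < n" "m < n" "distinct [k, k', m]" "reach E k k'" "reach E k m"
    "offdiag_gen n red1 k k' \<in> lie_gen n X" "offdiag_gen n red2 k' m \<in> lie_gen n X"
    using component_path_of_length_two[OF E kl(1) comp(1)] by blast
  obtain l' p red3 red4 where L: "l' < n" "p < n" "distinct [l, l', p]" "reach E l l'" "reach E l p"
    "offdiag_gen n red3 l l' \<in> lie_gen n X" "offdiag_gen n red4 l' p \<in> lie_gen n X"
    using component_path_of_length_two[OF E kl(2) comp(2)] by blast
  have "x \<noteq> y" if "reach E k x" "reach E l y" for x y
    using apart reach_sym[OF that(2)] that(1) unfolding reach_def by (metis rtranclp_trans)
  then have "{k, k', m} \<inter> {l, l', p} = {}"
    using K(4,5) L(4,5) by (auto simp: reach_def)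
  then have kl': "k \<noteq> l"  and "mask_mat {(k,l),(l,k)} M \<in> lie_gen n X"
    using mask_mat_pair_in_lie_gen[OF M(1) K(6,7) L(6,7) kl(1) K(1,2) kl(2) L(1,2) K(3) L(3)] by auto
  moreover have "mask_mat {(k,l),(l,k)} M =
      complex_of_real (if red then Im (M $$ (k,l)) else Re (M $$ (k,l))) \<cdot>\<^sub>m offdiag_gen n red k l"
    using mask_mat_offdiag_pair[OF lie_gen_carrier[OF M(1)] kl kl' su_skew_index[OF M(2) kl]] pure
    by (cases red) (auto intro!: eq_matI)
  ultimately show ?thesis using entry by (auto intro: lie_gen_smult_cancel)
qed

lemma has_both_colours_if_diagonal_differs:
  assumes pairs: "\<And>u v. u < n \<Longrightarrow> v < n \<Longrightarrow> u \<noteq> v \<Longrightarrow> \<exists>red. offdiag_gen n red u v \<in> lie_gen n X"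
    and M: "M \<in> lie_gen n X" "M \<in> su n" and ij: "i < n" "j < n"
    and diff: "Im (M $$ (i,i)) \<noteq> Im (M $$ (j,j))"
  shows "has_both_colours n X"
proof -
  have "i \<noteq> j" using diff by auto
  then obtain red where G: "offdiag_gen n red i j \<in> lie_gen n X" using pairs ij by blast
  have "offdiag_gen n (\<not> red) i j \<in> lie_gen n X"
    using other_colour_in_lie_gen[OF G M(1) ij \<open>i \<noteq> j\<close> su_skew_index[OF M(2) ij]
        su_Re_diag[OF M(2) ij(1)] su_Re_diag[OF M(2) ij(2)]] diff by blast
  with G ij \<open>i \<noteq> j\<close> show ?thesis by (intro has_both_coloursI)
qed

section \<open>The graphs of \<open>S\<close> and \<open>A\<close>\<close>

lemma edges_S_realised:
  assumes valid: "\<forall>g\<in>S. valid_gen n g" and S: "gen_mat n ` S \<subseteq> lie_gen n X"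
  shows "edges_realised n X (edges_S S)"
  unfolding edges_realised_def
proof (intro allI impI)
  fix u v c assume "({u,v}, c) \<in> edges_S S"
  then consider (offdiag) i j red where "{u,v} = {i,j}" "c = (if red then Red else Blue)"
      "(if red then GC i j else GB i j) \<in> S"
    | (diag) i j where "u = v" "c = Green" "GD i j \<in> S" "u = i \<or> u = j"
    unfolding edges_S_def by (auto simp: doubleton_eq_iff) (metis (full_types))+
  then show "u < n \<and> v < n \<and>
    (if u = v then c = Green else c \<noteq> Green \<and> offdiag_gen n (c = Red) u v \<in> lie_gen n X)"
  proof cases
    case offdiag
    have "valid_gen n (if red then GC i j else GB i j)" using valid offdiag(3) by blast
    then have ij: "i < j \<and> j < n" by (cases red) (auto simp: valid_gen_def)
    then have "offdiag_gen n red i j \<in> lie_gen n X"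
      using S offdiag(3) ij by (cases red) (auto simp: gen_mat_GB gen_mat_GC)
    then have "offdiag_gen n red u v \<in> lie_gen n X"
      using offdiag(1) ij offdiag_gen_swap_in_lie_gen[of n red i j] by (auto simp: doubleton_eq_iff)
    then show ?thesis using offdiag(1,2) ij by (cases red) (auto simp: doubleton_eq_iff)
  next
    case diag
    then show ?thesis using valid by (auto simp: valid_gen_def)
  qed
qed

lemma edges_A_memberD:
  assumes A: "A \<in> su n" and e: "({k,l}, c) \<in> edges_A n A"
  shows "k < n \<and> l < n \<and> (if c = Green then k = l \<and> A $$ (k,k) \<noteq> 0
     else k \<noteq> l \<and> (if c = Red then Im (A $$ (k,l)) else Re (A $$ (k,l))) \<noteq> 0)"
proof -
  have swap: "Re (A $$ (j,i)) = - Re (A $$ (i,j)) \<and> Im (A $$ (j,i)) = Im (A $$ (i,j))"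
    if "i < n" "j < n" for i j
    using su_skew_index[OF A that] by simp
  consider (offdiag) i j where "{k,l} = {i,j}" "i < n" "j < n" "i \<noteq> j"
      "c = Blue \<and> Re (A $$ (i,j)) \<noteq> 0 \<or> c = Red \<and> Im (A $$ (i,j)) \<noteq> 0"
    | (diag) "k = l" "k < n" "c = Green" "A $$ (k,k) \<noteq> 0"
    using e unfolding edges_A_def by auto
  then show ?thesis
  proof cases
    case offdiag
    then have "k = i \<and> l = j \<or> k = j \<and> l = i" by (auto simp: doubleton_eq_iff)
    then show ?thesis using offdiag swap[OF offdiag(2,3)] by auto
  qed auto
qed

lemma edges_A_single_colour:
  assumes single: "no_multi_edges (edges_A n A)" and e: "({k,l}, c) \<in> edges_A n A"
    and kl: "k < n" "l < n" "k \<noteq> l" and c: "c \<noteq> Green"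
  shows "(if c = Red then Re (A $$ (k,l)) else Im (A $$ (k,l))) = 0"
proof (rule ccontr)
  assume "(if c = Red then Re (A $$ (k,l)) else Im (A $$ (k,l))) \<noteq> 0"
  then have "({k,l}, if c = Red then Blue else Red) \<in> edges_A n A"
    using kl unfolding edges_A_def by (auto split: if_splits)
  with e single c show False by (auto simp: no_multi_edges_def split: if_splits)
qed

lemma edges_A_realised:
  assumes ES: "edges_realised n X (edges_S S)" and comp: "\<forall>v<n. card (component n (edges_S S) v) \<ge> 3"
    and A: "A \<in> lie_gen n X" "A \<in> su n" and single: "no_multi_edges (edges_A n A)"
  shows "edges_realised n X (edges_A n A)"
  unfolding edges_realised_def
proof (intro allI impI)
  fix k l c assume e: "({k,l}, c) \<in> edges_A n A"
  note edge = edges_A_memberD[OF A(2) e]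
  show "k < n \<and> l < n \<and>
    (if k = l then c = Green else c \<noteq> Green \<and> offdiag_gen n (c = Red) k l \<in> lie_gen n X)"
  proof (cases "k = l")
    case False
    then have kl: "k < n" "l < n" and c: "c \<noteq> Green"
      and entry: "(if c = Red then Im (A $$ (k,l)) else Re (A $$ (k,l))) \<noteq> 0"
      using edge by (auto split: if_splits)
    have "offdiag_gen n (c = Red) k l \<in> lie_gen n X"
    proof (cases "reach (edges_S S) k l")
      case True
      then obtain red' where "offdiag_gen n red' k l \<in> lie_gen n X"
        using reach_offdiag_gen[OF ES kl(1)] False by blast
      from offdiag_gen_in_lie_gen_if_entry[OF this A kl False] entry show ?thesis by simp
    next
      case apart: False
      from offdiag_gen_in_lie_gen_if_isolated_entry[OF ES _ _ apart A kl] comp kl entry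
        edges_A_single_colour[OF single e kl False c]
      show ?thesis by simp
    qed
    then show ?thesis using kl c False by simp
  qed (use edge in \<open>auto split: if_splits\<close>)
qed

lemma self_loop_has_both_colours:
  assumes pairs: "\<And>u v. u < n \<Longrightarrow> v < n \<Longrightarrow> u \<noteq> v \<Longrightarrow> \<exists>red. offdiag_gen n red u v \<in> lie_gen n X"
    and valid: "\<forall>g\<in>S. valid_gen n g" and S: "gen_mat n ` S \<subseteq> lie_gen n X"
    and A: "A \<in> lie_gen n X" "A \<in> su n" and loop: "has_self_loop (edges_A n A \<union> edges_S S)"
  shows "has_both_colours n X"
proof -
  obtain i c where "({i}, c) \<in> edges_A n A \<union> edges_S S" using loop by (auto simp: has_self_loop_def)
  then consider (A_loop) "i < n" "A $$ (i,i) \<noteq> 0" | (S_loop) a b where "GD a b \<in> S"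
  proof
    assume "({i}, c) \<in> edges_A n A"
    then show thesis using edges_A_memberD[OF A(2), of i i c] that(1) by (auto split: if_splits)
  next
    assume "({i}, c) \<in> edges_S S"
    then show thesis using valid that(2) by (auto simp: edges_S_def doubleton_eq_iff valid_gen_def)
  qed
  then show ?thesis
  proof cases
    case A_loop
    then obtain j where "j < n" "Im (A $$ (i,i)) \<noteq> Im (A $$ (j,j))"
      using su_diagonal_not_constant[OF A(2)] by blast
    with A_loop show ?thesis using has_both_colours_if_diagonal_differs[OF pairs A] by blast
  next
    case S_loop
    then have ab: "a < n" "b < n" "a \<noteq> b" using valid by (auto simp: valid_gen_def)
    have "gen_mat n (GD a b) \<in> lie_gen n X" using S S_loop by auto
    from has_both_colours_if_diagonal_differs[OF pairs this gen_mat_GD_su[OF ab] ab(1,2)]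
    show ?thesis using ab by (simp add: gen_mat_GD_index)
  qed
qed

theorem lemma16:
  fixes n :: nat and S :: "gen set" and A :: "complex mat"
  assumes "n \<ge> 2"
    and "\<forall>g\<in>S. valid_gen n g"
    and "A \<in> su n"
    and "\<forall>v<n. card (component n (edges_S S) v) \<ge> 3"
    and "no_multi_edges (edges_A n A)"
    and "connected_graph n (edges_A n A \<union> edges_S S)"
    and "has_self_loop (edges_A n A \<union> edges_S S) \<or>
         has_odd_red_cycle (edges_A n A \<union> edges_S S)"
  shows "lie_gen n ({A} \<union> gen_mat n ` S) = su n"
proof -
  let ?X = "{A} \<union> gen_mat n ` S"
  have X_su: "?X \<subseteq> su n" using assms(2,3) gen_mat_su by auto
  then have A: "A \<in> lie_gen n ?X" and S: "gen_mat n ` S \<subseteq> lie_gen n ?X"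
    by (auto intro: lie_gen.base simp: su_iff)
  have ES: "edges_realised n ?X (edges_S S)"
    using edges_S_realised[OF assms(2) S] .
  have E: "edges_realised n ?X (edges_A n A \<union> edges_S S)"
    using edges_realised_Un[OF edges_A_realised[OF ES assms(4) A assms(3,5)] ES] .
  have pairs: "\<exists>red. offdiag_gen n red u v \<in> lie_gen n ?X" if "u < n" "v < n" "u \<noteq> v" for u v
    using reach_offdiag_gen[OF E] assms(6) that unfolding connected_graph_def by blast
  have "has_both_colours n ?X"
    using assms(7) self_loop_has_both_colours[OF pairs assms(2) S A assms(3)]
      closed_walk_odd_red_has_both_colours[OF E] unfolding has_odd_red_cycle_def by blast
  then have "su n \<subseteq> lie_gen n ?X"
    using su_subset_lie_gen all_offdiag_gens_in_lie_gen[OF pairs] by blast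
  with lie_gen_subset_su[OF X_su] show ?thesis by blast
qed

end
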